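(* Let $\mathcal{G}=(\mathcal{P},\mathcal{L})$ be a Fischer space of symplectic type, let $R$ be a commutative ring with $2=0$, and let $A=M_R(\mathcal{G},1)$ be the nilpotent Matsuo algebra. For each line $\ell\in\mathcal{L}$, let $A^\ell_0$ and $A^\ell_1$ be the eigenspaces of $\operatorname{ad}_\ell$ for the eigenvalues $0$ and $1$. Then for each line $\ell$ we have $A=A^\ell_0\oplus A^\ell_1$, and \[ A^\ell_0A^\ell_0\subseteq A^\ell_0,\quad A^\ell_0A^\ell_1\subseteq A^\ell_1,\quad A^\ell_1A^\ell_1\subseteq A^\ell_0; \] that is, $A$ is a decomposition algebra with the $\mathbb{Z}/2\mathbb{Z}$ fusion law $0*0=\{0\}$, $0*1=1*0=\{1\}$, $1*1=\{0\}$, with one decomposition for each line.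
   Context: A 3-transposition group is a pair $(G,D)$ where $D$ is a conjugacy class of involutions generating $G$ such that $de$ has order at most $3$ for all $d,e\in D$. Its Fischer space $\mathcal{G}=(\mathcal{P},\mathcal{L})$ has point set $\mathcal{P}=D$ and as lines the $3$-subsets consisting of the three involutions of a subgroup isomorphic to $\mathrm{Sym}(3)$. Distinct points $p,q$ are collinear ($p\sim q$) if they lie on a common line (equivalently $pq$ has order $3$), and then $p\wedge q$ is the third point of that line. A subspace is a nonempty subset closed under $\wedge$. The subspace generated by two distinct intersecting lines is always either a complete quadrilateral (6 points, 4 lines, any two lines meet in one point, each point on two lines) or an affine plane of order $3$; $\mathcal{G}$ is of symplectic type if it is always a complete quadrilateral. For a commutative ring $R$ with $2=0$, the nilpotent Matsuo algebra $A=M_R(\mathcal{G},1)$ is the free $R$-module with basis $\mathcal{P}$ and commutative bilinear product $p\cdot q=0$ if $p=q$ or $p\not\sim q$, and $p\cdot q=p+q+p\wedge q$ if $p\sim q$. For a line $\ell$, we also write $\ell$ for the element of $A$ that is the sum of its three points, and $\operatorname{ad}_\ell\colon A\to A$, $v\mapsto \ell v$. The eigenspace for eigenvalue $\lambda$ is $\{v\in A:\ell v=\lambda v\}$. *)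

theory Defs
  imports "HOL-Algebra.Algebra"
begin

definition three_transposition_group :: "'g monoid \<Rightarrow> 'g set \<Rightarrow> bool" where
  "three_transposition_group G D \<longleftrightarrow>
     group G \<and>
     (\<exists>d\<in>carrier G. d \<noteq> \<one>\<^bsub>G\<^esub> \<and> d \<otimes>\<^bsub>G\<^esub> d = \<one>\<^bsub>G\<^esub> \<and>
        D = {g \<otimes>\<^bsub>G\<^esub> d \<otimes>\<^bsub>G\<^esub> inv\<^bsub>G\<^esub> g | g. g \<in> carrier G}) \<and>
     generate G D = carrier G \<and>
     (\<forall>d\<in>D. \<forall>e\<in>D. \<exists>n\<in>{1,2,3::nat}. (d \<otimes>\<^bsub>G\<^esub> e) [^]\<^bsub>G\<^esub> n = \<one>\<^bsub>G\<^esub>)"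

definition fischer_lines :: "'g monoid \<Rightarrow> 'g set \<Rightarrow> 'g set set" where
  "fischer_lines G D = {l. l \<subseteq> D \<and> card l = 3 \<and>
     (\<exists>H. subgroup H G \<and> (G\<lparr>carrier := H\<rparr>) \<cong> sym_group 3 \<and>
          l = {x \<in> H. x \<noteq> \<one>\<^bsub>G\<^esub> \<and> x \<otimes>\<^bsub>G\<^esub> x = \<one>\<^bsub>G\<^esub>})}"

definition collinear :: "'a set set \<Rightarrow> 'a \<Rightarrow> 'a \<Rightarrow> bool" where
  "collinear L p q \<longleftrightarrow> p \<noteq> q \<and> (\<exists>l\<in>L. p \<in> l \<and> q \<in> l)"

definition wedge :: "'a set set \<Rightarrow> 'a \<Rightarrow> 'a \<Rightarrow> 'a" where
  "wedge L p q = (THE r. r \<noteq> p \<and> r \<noteq> q \<and> (\<exists>l\<in>L. l = {p, q, r}))"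

definition is_subspace :: "'a set \<Rightarrow> 'a set set \<Rightarrow> 'a set \<Rightarrow> bool" where
  "is_subspace P L Y \<longleftrightarrow> Y \<noteq> {} \<and> Y \<subseteq> P \<and>
     (\<forall>p\<in>Y. \<forall>q\<in>Y. collinear L p q \<longrightarrow> wedge L p q \<in> Y)"

definition generated_subspace :: "'a set \<Rightarrow> 'a set set \<Rightarrow> 'a set \<Rightarrow> 'a set" where
  "generated_subspace P L S = \<Inter>{Y. is_subspace P L Y \<and> S \<subseteq> Y}"

definition complete_quadrilateral :: "'a set set \<Rightarrow> 'a set \<Rightarrow> bool" where
  "complete_quadrilateral L Y \<longleftrightarrow>
     (let LX = {l\<in>L. l \<subseteq> Y} in
       card Y = 6 \<and> card LX = 4 \<and>
       (\<forall>l1\<in>LX. \<forall>l2\<in>LX. l1 \<noteq> l2 \<longrightarrow> card (l1 \<inter> l2) = 1) \<and>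
       (\<forall>p\<in>Y. card {l\<in>LX. p \<in> l} = 2))"

definition symplectic_type :: "'a set \<Rightarrow> 'a set set \<Rightarrow> bool" where
  "symplectic_type P L \<longleftrightarrow>
     (\<forall>l1\<in>L. \<forall>l2\<in>L. l1 \<noteq> l2 \<and> l1 \<inter> l2 \<noteq> {} \<longrightarrow>
        complete_quadrilateral L (generated_subspace P L (l1 \<union> l2)))"

definition matsuo_carrier :: "'a set \<Rightarrow> ('a \<Rightarrow> 'r::comm_ring_1) set" where
  "matsuo_carrier P = {v. finite {x. v x \<noteq> 0} \<and> {x. v x \<noteq> 0} \<subseteq> P}"

definition basis_vec :: "'a \<Rightarrow> 'a \<Rightarrow> 'r::comm_ring_1" where
  "basis_vec p = (\<lambda>x. if x = p then 1 else 0)"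

definition basis_prod :: "'a set set \<Rightarrow> 'a \<Rightarrow> 'a \<Rightarrow> 'a \<Rightarrow> 'r::comm_ring_1" where
  "basis_prod L p q = (if collinear L p q
     then (\<lambda>x. basis_vec p x + basis_vec q x + basis_vec (wedge L p q) x)
     else (\<lambda>x. 0))"

definition matsuo_mult :: "'a set set \<Rightarrow> ('a \<Rightarrow> 'r::comm_ring_1) \<Rightarrow> ('a \<Rightarrow> 'r) \<Rightarrow> ('a \<Rightarrow> 'r)" where
  "matsuo_mult L u v = (\<lambda>x. \<Sum>p\<in>{y. u y \<noteq> 0}. \<Sum>q\<in>{y. v y \<noteq> 0}. u p * v q * basis_prod L p q x)"

definition line_elem :: "'a set \<Rightarrow> 'a \<Rightarrow> 'r::comm_ring_1" where
  "line_elem l = (\<lambda>x. if x \<in> l then 1 else 0)"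

definition eigenspace_ad :: "'a set \<Rightarrow> 'a set set \<Rightarrow> 'a set \<Rightarrow> 'r \<Rightarrow> ('a \<Rightarrow> 'r::comm_ring_1) set" where
  "eigenspace_ad P L l c = {v \<in> matsuo_carrier P. matsuo_mult L (line_elem l) v = (\<lambda>x. c * v x)}"

end

theory Submission
  imports Defs
begin

text \<open>
In characteristic 2 the Matsuo product satisfies p p = 0, and for a Fischer space of symplectic
type it also satisfies the Jacobi identity, so every ad v is a derivation. On basis triples the
Jacobi identity is a case analysis on which pairs of the three points are collinear, resting on
two facts about symplectic spaces: two intersecting lines span a complete quadrilateral, and a
point off a line is collinear with none or exactly two of its points. The same facts show, on
basis vectors, that ad l is idempotent for a line l. For an idempotent derivation D one has
v = (v + D v) + D v with D (v + D v) = 0, and the Leibniz rule D(a b) = (D a) b + a (D b) makes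
eigenvalues add: A_c A_d is contained in A_(c+d). As 1 + 1 = 0, this is the fusion law.
\<close>

section \<open>Geometry of symplectic Fischer spaces\<close>

lemma collinear_commute: "collinear L p q = collinear L q p"
  unfolding collinear_def by auto

lemma not_collinear_self [simp]: "\<not> collinear L p p"
  unfolding collinear_def by simp

lemma wedge_commute: "wedge L p q = wedge L q p"
  unfolding wedge_def by (intro arg_cong[where f = The] ext) (auto simp: insert_commute)

lemma complete_quadrilateral_card_lines_through:
  assumes "complete_quadrilateral L Y" "y \<in> Y"
  shows "card {m \<in> L. m \<subseteq> Y \<and> y \<in> m} = 2"
proof -
  from assms(1) have "\<forall>p\<in>Y. card {m \<in> {m \<in> L. m \<subseteq> Y}. p \<in> m} = 2"
    unfolding complete_quadrilateral_def Let_def by (elim conjE)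
  with assms(2) have "card {m \<in> {m \<in> L. m \<subseteq> Y}. y \<in> m} = 2" by simp
  also have "{m \<in> {m \<in> L. m \<subseteq> Y}. y \<in> m} = {m \<in> L. m \<subseteq> Y \<and> y \<in> m}" by auto
  finally show ?thesis .
qed

lemma complete_quadrilateral_second_line:
  assumes "complete_quadrilateral L Y" "m \<in> L" "m \<subseteq> Y" "y \<in> m"
  obtains m' where "m' \<in> L" "m' \<subseteq> Y" "y \<in> m'" "m' \<noteq> m"
proof -
  have "\<not> {n \<in> L. n \<subseteq> Y \<and> y \<in> n} \<subseteq> {m}"
  proof
    assume "{n \<in> L. n \<subseteq> Y \<and> y \<in> n} \<subseteq> {m}"
    then have "card {n \<in> L. n \<subseteq> Y \<and> y \<in> n} \<le> 1"
      using card_mono[of "{m}"] by fastforce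
    with complete_quadrilateral_card_lines_through[OF assms(1)] assms(3,4) show False by auto
  qed
  then show thesis using that by blast
qed

lemma complete_quadrilateral_two_lines_through:
  assumes "complete_quadrilateral L Y" "y \<in> Y"
    and "m1 \<in> L" "m1 \<subseteq> Y" "y \<in> m1" "m2 \<in> L" "m2 \<subseteq> Y" "y \<in> m2" "m3 \<in> L" "m3 \<subseteq> Y" "y \<in> m3"
  shows "m1 = m2 \<or> m1 = m3 \<or> m2 = m3"
proof (rule ccontr)
  assume distinct: "\<not> ?thesis"
  let ?M = "{m \<in> L. m \<subseteq> Y \<and> y \<in> m}"
  have card: "card ?M = 2" by (rule complete_quadrilateral_card_lines_through[OF assms(1,2)])
  then have "finite ?M" by (intro card_ge_0_finite) simp
  moreover have "{m1, m2, m3} \<subseteq> ?M" using assms by auto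
  ultimately have "card {m1, m2, m3} \<le> 2" using card card_mono by metis
  with distinct show False by auto
qed

lemma complete_quadrilateral_lines_meet:
  assumes "complete_quadrilateral L Y" "m1 \<in> L" "m1 \<subseteq> Y" "m2 \<in> L" "m2 \<subseteq> Y" "m1 \<noteq> m2"
  shows "\<exists>x. m1 \<inter> m2 = {x}"
proof -
  from assms(1) have "\<forall>m1\<in>{m \<in> L. m \<subseteq> Y}. \<forall>m2\<in>{m \<in> L. m \<subseteq> Y}. m1 \<noteq> m2 \<longrightarrow> card (m1 \<inter> m2) = 1"
    unfolding complete_quadrilateral_def Let_def by blast
  with assms(2-6) have "card (m1 \<inter> m2) = 1" by blast
  then show ?thesis by (simp add: card_1_singleton_iff)
qed

lemma complete_quadrilateral_card: "complete_quadrilateral L Y \<Longrightarrow> card Y = 6"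
  unfolding complete_quadrilateral_def Let_def by (elim conjE)

locale symplectic_space =
  fixes P :: "'a set" and L :: "'a set set"
  assumes line_subset: "l \<in> L \<Longrightarrow> l \<subseteq> P"
    and card_line: "l \<in> L \<Longrightarrow> card l = 3"
    and symplectic: "symplectic_type P L"
begin

definition line_span :: "'a set \<Rightarrow> 'a set \<Rightarrow> 'a set" where
  "line_span l1 l2 = generated_subspace P L (l1 \<union> l2)"

lemma line_span_complete_quadrilateral:
  assumes "l1 \<in> L" "l2 \<in> L" "l1 \<noteq> l2" "p \<in> l1" "p \<in> l2"
  shows "complete_quadrilateral L (line_span l1 l2)"
  using symplectic assms unfolding symplectic_type_def line_span_def by blast

lemma lines_subset_line_span: "l1 \<union> l2 \<subseteq> line_span l1 l2"
  unfolding line_span_def generated_subspace_def by auto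

lemma line_span_wedge_closed:
  assumes "x \<in> line_span l1 l2" "y \<in> line_span l1 l2" "collinear L x y"
  shows "wedge L x y \<in> line_span l1 l2"
proof -
  have "wedge L x y \<in> Y" if "is_subspace P L Y" "l1 \<union> l2 \<subseteq> Y" for Y
  proof -
    have "x \<in> Y" "y \<in> Y" using assms(1,2) that unfolding line_span_def generated_subspace_def by blast+
    with that(1) assms(3) show ?thesis unfolding is_subspace_def by blast
  qed
  then show ?thesis unfolding line_span_def generated_subspace_def by blast
qed

lemma lines_meet_once:
  assumes "l1 \<in> L" "l2 \<in> L" "l1 \<noteq> l2" "p \<in> l1" "p \<in> l2" "q \<in> l1" "q \<in> l2"
  shows "p = q"
proof -
  have "l1 \<subseteq> line_span l1 l2" "l2 \<subseteq> line_span l1 l2" using lines_subset_line_span by auto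
  from complete_quadrilateral_lines_meet[OF line_span_complete_quadrilateral[OF assms(1-5)] assms(1) this(1) assms(2) this(2) assms(3)]
  obtain z where "l1 \<inter> l2 = {z}" ..
  with assms(4-7) show ?thesis by (metis IntI singletonD)
qed

lemma line_distinct:
  assumes "{x, y, z} \<in> L"
  shows "x \<noteq> y" "y \<noteq> z" "x \<noteq> z" "y \<noteq> x" "z \<noteq> y" "z \<noteq> x"
  using card_line[OF assms] by (auto simp: card_insert_if split: if_splits)

lemma line_through_two_points:
  assumes "l \<in> L" "p \<in> l" "q \<in> l" "p \<noteq> q"
  obtains r where "l = {p, q, r}"
proof -
  have "card (l - {p, q}) = 1"
    using card_line[OF assms(1)] assms(2-4) by (simp add: card_Diff_subset)
  then obtain r where "l - {p, q} = {r}" by (auto simp: card_1_singleton_iff)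
  then have "l = {p, q, r}" using assms(2,3) by blast
  then show thesis by (rule that)
qed

lemma wedge_eq:
  assumes "{p, q, r} \<in> L"
  shows "wedge L p q = r"
  unfolding wedge_def
proof (rule the_equality)
  show "r \<noteq> p \<and> r \<noteq> q \<and> (\<exists>l\<in>L. l = {p, q, r})"
    using assms line_distinct[OF assms] by auto
next
  fix r' assume r': "r' \<noteq> p \<and> r' \<noteq> q \<and> (\<exists>l\<in>L. l = {p, q, r'})"
  then have "{p, q, r'} = {p, q, r}"
    using lines_meet_once[OF _ assms, of "{p, q, r'}" p q] line_distinct[OF assms] by auto
  then show "r' = r" using r' line_distinct[OF assms] by auto
qed

lemma collinear_line:
  assumes "collinear L p q"
  shows "{p, q, wedge L p q} \<in> L"
proof -
  obtain l where l: "l \<in> L" "p \<in> l" "q \<in> l" "p \<noteq> q"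
    using assms unfolding collinear_def by auto
  then obtain r where "l = {p, q, r}" by (rule line_through_two_points)
  with l wedge_eq show ?thesis by auto
qed

lemma line_collinear:
  assumes "{x, y, z} \<in> L"
  shows "collinear L x y" "collinear L y x" "collinear L x z"
    "collinear L z x" "collinear L y z" "collinear L z y"
  using assms line_distinct[OF assms] unfolding collinear_def by (auto intro!: bexI[of _ "{x, y, z}"])

lemma line_wedge:
  assumes "{x, y, z} \<in> L"
  shows "wedge L x y = z" "wedge L y x = z" "wedge L x z = y"
    "wedge L z x = y" "wedge L y z = x" "wedge L z y = x"
  using assms by (auto intro!: wedge_eq simp: insert_commute)

lemma line_span_line_through:
  assumes l1: "l1 \<in> L" and l2: "l2 \<in> L" and "l1 \<noteq> l2" "p \<in> l1" "p \<in> l2"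
    and x: "x \<in> l1" "x \<noteq> p"
  shows "\<exists>y s. y \<in> l2 - {p} \<and> s \<in> line_span l1 l2 - (l1 \<union> l2) \<and> {x, y, s} \<in> L"
proof -
  let ?Y = "line_span l1 l2"
  note cq = line_span_complete_quadrilateral[OF assms(1-5)]
  have Y: "l1 \<subseteq> ?Y" "l2 \<subseteq> ?Y" using lines_subset_line_span by auto
  have x_l2: "x \<notin> l2" using lines_meet_once[OF assms(1-5)] x by blast
  obtain m where m: "m \<in> L" "m \<subseteq> ?Y" "x \<in> m" "m \<noteq> l1"
    using complete_quadrilateral_second_line[OF cq l1 Y(1) x(1)] by blast
  have "m \<noteq> l2" using m x_l2 by blast
  have "p \<notin> m"
    using complete_quadrilateral_two_lines_through[OF cq, of p l1 l2 m] Y assms(3-5) l1 l2 m \<open>m \<noteq> l2\<close>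
    by blast
  obtain y where y: "m \<inter> l2 = {y}"
    using complete_quadrilateral_lines_meet[OF cq m(1,2) l2 Y(2) \<open>m \<noteq> l2\<close>] by blast
  have "x \<noteq> y" using y x_l2 by blast
  then obtain s where s: "m = {x, y, s}" using line_through_two_points[OF m(1,3)] y by blast
  note d = line_distinct[of x y s]
  have "s \<notin> l1" using lines_meet_once[OF m(1) l1 m(4), of x s] d m s x by auto
  moreover have "s \<notin> l2" using lines_meet_once[OF m(1) l2 \<open>m \<noteq> l2\<close>, of y s] d m s y by auto
  ultimately show ?thesis using y \<open>p \<notin> m\<close> m s by blast
qed

lemma line_span_minus_lines:
  assumes "l1 \<in> L" "l2 \<in> L" "l1 \<noteq> l2" "p \<in> l1" "p \<in> l2"
  obtains s where "line_span l1 l2 - (l1 \<union> l2) = {s}"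
proof -
  have inter: "l1 \<inter> l2 = {p}" using lines_meet_once[OF assms(1-3) _ _ assms(4,5)] assms(4,5) by blast
  have fin: "finite l1" "finite l2" using card_line assms(1,2) by (auto intro: card_ge_0_finite)
  have "card l1 + card l2 = card (l1 \<union> l2) + card (l1 \<inter> l2)" using fin by (rule card_Un_Int)
  then have "card (l1 \<union> l2) = 5" using card_line[OF assms(1)] card_line[OF assms(2)] inter by simp
  moreover have "card (line_span l1 l2) = 6"
    using complete_quadrilateral_card[OF line_span_complete_quadrilateral[OF assms]] .
  ultimately have "card (line_span l1 l2 - (l1 \<union> l2)) = 1"
    using card_Diff_subset[OF _ lines_subset_line_span] fin by simp
  then show thesis using that by (auto simp: card_1_singleton_iff)
qed

text \<open>The sixth point s of the quadrilateral spanned by the two lines lies on the second line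
  through a and on the second line through a'.\<close>

lemma quadrilateral_completion:
  assumes l1: "{p, a, a'} \<in> L" and l2: "{p, b, b'} \<in> L" and ne: "{p, a, a'} \<noteq> {p, b, b'}"
  shows "\<exists>s. ({a, b, s} \<in> L \<and> {a', b', s} \<in> L) \<or> ({a, b', s} \<in> L \<and> {a', b, s} \<in> L)"
proof -
  define m1 where "m1 = {p, a, a'}"
  define m2 where "m2 = {p, b, b'}"
  have m: "m1 \<in> L" "m2 \<in> L" "m1 \<noteq> m2" "p \<in> m1" "p \<in> m2"
    using assms by (auto simp: m1_def m2_def)
  note d1 = line_distinct[OF l1]
  obtain s0 where s0: "line_span m1 m2 - (m1 \<union> m2) = {s0}" using line_span_minus_lines[OF m] .
  obtain y s where y: "y \<in> m2 - {p}" "s \<in> line_span m1 m2 - (m1 \<union> m2)" "{a, y, s} \<in> L"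
    using line_span_line_through[OF m, of a] d1 by (auto simp: m1_def)
  obtain y' s' where y': "y' \<in> m2 - {p}" "s' \<in> line_span m1 m2 - (m1 \<union> m2)" "{a', y', s'} \<in> L"
    using line_span_line_through[OF m, of a'] d1 by (auto simp: m1_def)
  have "s' = s" using s0 y(2) y'(2) by auto
  have a'_m2: "a' \<notin> m2" using lines_meet_once[OF m(1-3) _ _ m(4,5)] d1 by (auto simp: m1_def)
  have "y \<noteq> y'"
  proof
    assume "y = y'"
    have "y \<noteq> s" using y by auto
    then have "{a, y, s} = {a', y, s}"
      using lines_meet_once[OF y(3) _ _ _ _ _ _, of "{a', y, s}" y s] y'(3) \<open>y = y'\<close> \<open>s' = s\<close> by auto
    then have "a' \<in> {a, y, s}" by auto
    then show False using d1 a'_m2 y y(2) by (auto simp: m1_def)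
  qed
  then have "(y = b \<and> y' = b') \<or> (y = b' \<and> y' = b)" using y(1) y'(1) by (auto simp: m2_def)
  then show ?thesis using y(3) y'(3) \<open>s' = s\<close> by blast
qed

lemma collinear_second_point:
  assumes l: "{a, b, c} \<in> L" and p: "p \<notin> {a, b, c}" and pa: "collinear L p a"
  shows "collinear L p b \<or> collinear L p c"
proof -
  have m: "{a, p, wedge L p a} \<in> L" using collinear_line[OF pa] by (simp add: insert_commute)
  have "{a, b, c} \<noteq> {a, p, wedge L p a}" using p by auto
  from quadrilateral_completion[OF l m this] obtain s where
    "({b, p, s} \<in> L \<and> {c, wedge L p a, s} \<in> L) \<or> ({b, wedge L p a, s} \<in> L \<and> {c, p, s} \<in> L)"
    by blast
  then show ?thesis using line_collinear(2)[of b p s] line_collinear(2)[of c p s] by blast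
qed

text \<open>Otherwise p would lie on three lines of the quadrilateral spanned by {a, b, c} and the line
  through p and a.\<close>

lemma not_collinear_three_points:
  assumes l: "{a, b, c} \<in> L" and p: "p \<notin> {a, b, c}"
    and pa: "collinear L p a" and pb: "collinear L p b" and pc: "collinear L p c"
  shows False
proof -
  define m where "m = {p, a, wedge L p a}"
  define mb where "mb = {p, b, wedge L p b}"
  define mc where "mc = {p, c, wedge L p c}"
  have lines: "m \<in> L" "mb \<in> L" "mc \<in> L"
    using collinear_line pa pb pc by (simp_all add: m_def mb_def mc_def)
  have "{a, b, c} \<noteq> m" using p by (auto simp: m_def)
  have "a \<in> m" by (simp add: m_def)
  note cq = line_span_complete_quadrilateral[OF l lines(1) \<open>{a, b, c} \<noteq> m\<close> insertI1 \<open>a \<in> m\<close>]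
  let ?Y = "line_span {a, b, c} m"
  have Y: "p \<in> ?Y" "b \<in> ?Y" "c \<in> ?Y" "m \<subseteq> ?Y"
    using lines_subset_line_span[of "{a, b, c}" m] unfolding m_def by auto
  have "wedge L p b \<in> ?Y" "wedge L p c \<in> ?Y"
    using line_span_wedge_closed[OF Y(1) Y(2) pb] line_span_wedge_closed[OF Y(1) Y(3) pc] .
  with Y(1-3) have "mb \<subseteq> ?Y" "mc \<subseteq> ?Y" unfolding mb_def mc_def by simp_all
  note d = line_distinct[OF l]
  have "x \<notin> m" if "x \<in> {b, c}" for x
  proof
    assume "x \<in> m"
    have "x = a" by (rule lines_meet_once[OF l lines(1) \<open>{a, b, c} \<noteq> m\<close> _ \<open>x \<in> m\<close> insertI1 \<open>a \<in> m\<close>])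
      (use that in blast)
    with that d show False by blast
  qed
  moreover have "c \<notin> mb"
  proof
    assume "c \<in> mb"
    have "mb \<noteq> {a, b, c}" using p by (auto simp: mb_def)
    moreover have "b \<in> mb" by (simp add: mb_def)
    ultimately have "b = c"
      using lines_meet_once[OF lines(2) l _ \<open>b \<in> mb\<close> _ \<open>c \<in> mb\<close>] by blast
    with d show False by blast
  qed
  ultimately have "m \<noteq> mb" "m \<noteq> mc" "mb \<noteq> mc" by (auto simp: mb_def mc_def)
  moreover have "p \<in> m" "p \<in> mb" "p \<in> mc" by (simp_all add: m_def mb_def mc_def)
  ultimately show False
    using complete_quadrilateral_two_lines_through[OF cq Y(1) lines(1) Y(4) _ lines(2) \<open>mb \<subseteq> ?Y\<close> _ lines(3) \<open>mc \<subseteq> ?Y\<close>]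
    by blast
qed

lemma point_off_line_collinear_cases:
  assumes l: "{a, b, c} \<in> L" and p: "p \<notin> {a, b, c}"
  shows "(\<not> collinear L a p \<and> \<not> collinear L b p \<and> \<not> collinear L c p)
    \<or> (collinear L a p \<and> collinear L b p \<and> \<not> collinear L c p)
    \<or> (collinear L b p \<and> collinear L c p \<and> \<not> collinear L a p)
    \<or> (collinear L a p \<and> collinear L c p \<and> \<not> collinear L b p)"
proof -
  have "{b, c, a} \<in> L" "{c, a, b} \<in> L" using l by (simp_all add: insert_commute)
  moreover have "p \<notin> {b, c, a}" "p \<notin> {c, a, b}" using p by auto
  moreover have "collinear L x p = collinear L p x" for x by (rule collinear_commute)
  ultimately show ?thesis
    using collinear_second_point[OF l p] not_collinear_three_points[OF l p]
      collinear_second_point[of b c a p] collinear_second_point[of c a b p]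
    by metis
qed

end

section \<open>Bilinear calculus of the Matsuo product\<close>

lemma char_two_add_self:
  assumes "(2::'r::comm_ring_1) = 0"
  shows "x + x = (0::'r)" "x + (x + y) = y"
proof -
  show xx: "x + x = 0" using assms by (simp flip: mult_2)
  show "x + (x + y) = y" by (simp add: add.assoc[symmetric] xx)
qed

lemma matsuo_mult_eq_sum:
  assumes "finite S" "finite T" "{x. u x \<noteq> 0} \<subseteq> S" "{x. v x \<noteq> 0} \<subseteq> T"
  shows "matsuo_mult L u v y = (\<Sum>p\<in>S. \<Sum>q\<in>T. u p * v q * basis_prod L p q y)"
proof -
  have "matsuo_mult L u v y = (\<Sum>p\<in>S. \<Sum>q\<in>{x. v x \<noteq> 0}. u p * v q * basis_prod L p q y)"
    unfolding matsuo_mult_def by (rule sum.mono_neutral_left[OF assms(1,3)]) simp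
  also have "\<dots> = (\<Sum>p\<in>S. \<Sum>q\<in>T. u p * v q * basis_prod L p q y)"
    by (intro sum.cong refl sum.mono_neutral_left[OF assms(2,4)]) simp
  finally show ?thesis .
qed

lemma basis_prod_commute: "basis_prod L p q = basis_prod L q p"
  unfolding basis_prod_def collinear_commute[of L p q] wedge_commute[of L p q] by (simp add: add_ac)

lemma matsuo_mult_commute: "matsuo_mult L u v = matsuo_mult L v u"
  unfolding matsuo_mult_def by (rule ext, subst sum.swap) (simp add: basis_prod_commute[of L] mult_ac)

lemma matsuo_mult_zero_right [simp]: "matsuo_mult L u (\<lambda>_. 0) = (\<lambda>_. 0)"
  by (simp add: matsuo_mult_def)

lemma support_lincomb:
  "{x. (\<Sum>i\<in>I. c i * f i x) \<noteq> (0::'r::comm_ring_1)} \<subseteq> (\<Union>i\<in>I. {x. f i x \<noteq> 0})"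
proof
  fix x assume "x \<in> {x. (\<Sum>i\<in>I. c i * f i x) \<noteq> 0}"
  then have "(\<Sum>i\<in>I. c i * f i x) \<noteq> 0" by simp
  then obtain i where "i \<in> I" "c i * f i x \<noteq> 0" by (rule sum.not_neutral_contains_not_neutral)
  then show "x \<in> (\<Union>i\<in>I. {x. f i x \<noteq> 0})" by (cases "f i x = 0") auto
qed

lemma finite_support_add:
  "finite {x. u x \<noteq> 0} \<Longrightarrow> finite {x. v x \<noteq> 0} \<Longrightarrow> finite {x. u x + v x \<noteq> (0::'r::comm_ring_1)}"
  by (rule finite_subset[of _ "{x. u x \<noteq> 0} \<union> {x. v x \<noteq> 0}"]) auto

lemma matsuo_mult_lincomb_right:
  assumes I: "finite I" and f: "\<And>i. i \<in> I \<Longrightarrow> finite {x. f i x \<noteq> 0}" and z: "finite {x. z x \<noteq> 0}"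
  shows "matsuo_mult L z (\<lambda>x. \<Sum>i\<in>I. c i * f i x)
    = (\<lambda>y. \<Sum>i\<in>I. c i * matsuo_mult L z (f i) y :: 'r::comm_ring_1)"
proof
  fix y
  define S where "S = {x. z x \<noteq> 0}"
  define T where "T = (\<Union>i\<in>I. {x. f i x \<noteq> 0})"
  have fin: "finite S" "finite T" using I f z by (simp_all add: S_def T_def)
  have "matsuo_mult L z (\<lambda>x. \<Sum>i\<in>I. c i * f i x) y
      = (\<Sum>p\<in>S. \<Sum>q\<in>T. z p * (\<Sum>i\<in>I. c i * f i q) * basis_prod L p q y)"
    using support_lincomb[of c f I] by (intro matsuo_mult_eq_sum fin) (simp_all add: S_def T_def)
  also have "\<dots> = (\<Sum>i\<in>I. c i * (\<Sum>p\<in>S. \<Sum>q\<in>T. z p * f i q * basis_prod L p q y))"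
    by (simp add: sum_distrib_left sum_distrib_right mult_ac sum.swap[of _ I])
  also have "\<dots> = (\<Sum>i\<in>I. c i * matsuo_mult L z (f i) y)"
    by (intro sum.cong refl arg_cong[where f = "(*) _"] matsuo_mult_eq_sum[symmetric] fin)
      (auto simp: S_def T_def)
  finally show "matsuo_mult L z (\<lambda>x. \<Sum>i\<in>I. c i * f i x) y = (\<Sum>i\<in>I. c i * matsuo_mult L z (f i) y)" .
qed

lemma matsuo_mult_add_right:
  assumes "finite {x. z x \<noteq> 0}" "finite {x. u x \<noteq> 0}" "finite {x. v x \<noteq> 0}"
  shows "matsuo_mult L z (\<lambda>x. u x + v x) = (\<lambda>y. matsuo_mult L z u y + matsuo_mult L z v y :: 'r::comm_ring_1)"
proof
  fix y
  define T where "T = {x. u x \<noteq> 0} \<union> {x. v x \<noteq> 0}"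
  have T: "finite T" "{x. u x + v x \<noteq> 0} \<subseteq> T" "{x. u x \<noteq> 0} \<subseteq> T" "{x. v x \<noteq> 0} \<subseteq> T"
    using assms(2,3) by (auto simp: T_def)
  show "matsuo_mult L z (\<lambda>x. u x + v x) y = matsuo_mult L z u y + matsuo_mult L z v y"
    unfolding matsuo_mult_eq_sum[OF assms(1) T(1) order.refl T(2)]
      matsuo_mult_eq_sum[OF assms(1) T(1) order.refl T(3)] matsuo_mult_eq_sum[OF assms(1) T(1) order.refl T(4)]
    by (simp add: distrib_left distrib_right sum.distrib)
qed

lemma matsuo_mult_add_left:
  assumes "finite {x. z x \<noteq> 0}" "finite {x. u x \<noteq> 0}" "finite {x. v x \<noteq> 0}"
  shows "matsuo_mult L (\<lambda>x. u x + v x) z = (\<lambda>y. matsuo_mult L u z y + matsuo_mult L v z y :: 'r::comm_ring_1)"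
  using matsuo_mult_add_right[OF assms, where L = L] by (simp add: matsuo_mult_commute[of L _ z])

lemma basis_expansion:
  assumes "finite {x. v x \<noteq> 0}"
  shows "v = (\<lambda>y. \<Sum>q\<in>{x. v x \<noteq> 0}. v q * basis_vec q y :: 'r::comm_ring_1)"
proof
  fix y
  have "(\<Sum>q\<in>{x. v x \<noteq> 0}. v q * basis_vec q y) = (\<Sum>q\<in>{x. v x \<noteq> 0}. if q = y then v y else 0)"
    by (rule sum.cong) (auto simp: basis_vec_def)
  then show "v y = (\<Sum>q\<in>{x. v x \<noteq> 0}. v q * basis_vec q y)" using assms by auto
qed

lemma finite_support_basis_vec: "finite {x. (basis_vec p x :: 'r::comm_ring_1) \<noteq> 0}"
  by (rule finite_subset[of _ "{p}"]) (auto simp: basis_vec_def)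

lemma support_basis_prod: "{x. (basis_prod L p q x :: 'r::comm_ring_1) \<noteq> 0} \<subseteq> {p, q, wedge L p q}"
  by (auto simp: basis_prod_def basis_vec_def)

lemma finite_support_basis_prod: "finite {x. (basis_prod L p q x :: 'r::comm_ring_1) \<noteq> 0}"
  using support_basis_prod by (rule finite_subset) simp

lemma support_matsuo_mult:
  "{x. (matsuo_mult L u v x :: 'r::comm_ring_1) \<noteq> 0}
    \<subseteq> (\<Union>p\<in>{x. u x \<noteq> 0}. \<Union>q\<in>{x. v x \<noteq> 0}. {x. (basis_prod L p q x :: 'r) \<noteq> 0})"
proof
  fix x assume "x \<in> {x. matsuo_mult L u v x \<noteq> 0}"
  then have "(\<Sum>p\<in>{x. u x \<noteq> 0}. \<Sum>q\<in>{x. v x \<noteq> 0}. u p * v q * basis_prod L p q x) \<noteq> 0"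
    by (simp add: matsuo_mult_def)
  then obtain p where p: "p \<in> {x. u x \<noteq> 0}" "(\<Sum>q\<in>{x. v x \<noteq> 0}. u p * v q * basis_prod L p q x) \<noteq> 0"
    by (rule sum.not_neutral_contains_not_neutral)
  from p(2) obtain q where q: "q \<in> {x. v x \<noteq> 0}" "u p * v q * basis_prod L p q x \<noteq> 0"
    by (rule sum.not_neutral_contains_not_neutral)
  from q(2) have "basis_prod L p q x \<noteq> (0::'r)" by (metis mult_zero_right)
  then show "x \<in> (\<Union>p\<in>{x. u x \<noteq> 0}. \<Union>q\<in>{x. v x \<noteq> 0}. {x. (basis_prod L p q x :: 'r) \<noteq> 0})"
    by (intro UN_I[OF p(1)] UN_I[OF q(1)]) simp
qed

lemma finite_support_matsuo_mult:
  "finite {x. u x \<noteq> 0} \<Longrightarrow> finite {x. v x \<noteq> 0} \<Longrightarrow> finite {x. (matsuo_mult L u v x :: 'r::comm_ring_1) \<noteq> 0}"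
  by (rule finite_subset[OF support_matsuo_mult]) (simp add: finite_support_basis_prod)

lemma matsuo_mult_expand_right:
  assumes "finite {x. z x \<noteq> 0}" "finite {x. v x \<noteq> 0}"
  shows "matsuo_mult L z v = (\<lambda>y. \<Sum>q\<in>{x. v x \<noteq> 0}. v q * matsuo_mult L z (basis_vec q) y :: 'r::comm_ring_1)"
  by (subst basis_expansion[OF assms(2)], rule matsuo_mult_lincomb_right)
    (simp_all add: assms finite_support_basis_vec)

lemma matsuo_mult_expand_left:
  assumes "finite {x. z x \<noteq> 0}" "finite {x. v x \<noteq> 0}"
  shows "matsuo_mult L v z = (\<lambda>y. \<Sum>q\<in>{x. v x \<noteq> 0}. v q * matsuo_mult L (basis_vec q) z y :: 'r::comm_ring_1)"
  using matsuo_mult_expand_right[OF assms, where L = L] by (simp add: matsuo_mult_commute[of L _ z])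

lemma matsuo_mult_basis_vec: "matsuo_mult L (basis_vec p) (basis_vec q) = (basis_prod L p q :: _ \<Rightarrow> 'r::comm_ring_1)"
  by (rule ext, subst matsuo_mult_eq_sum[of "{p}" "{q}"]) (auto simp: basis_vec_def)

lemma basis_prod_collinear:
  "collinear L p q \<Longrightarrow> basis_prod L p q = (\<lambda>x. basis_vec p x + basis_vec q x + basis_vec (wedge L p q) x)"
  by (simp add: basis_prod_def)

lemma basis_prod_not_collinear: "\<not> collinear L p q \<Longrightarrow> basis_prod L p q = (\<lambda>_. 0)"
  by (simp add: basis_prod_def)

lemmas matsuo_basis_simps =
  matsuo_mult_basis_vec basis_prod_collinear basis_prod_not_collinear matsuo_mult_add_right
  finite_support_add finite_support_basis_vec

lemma matsuo_mult_scale_right: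
  assumes "finite {x. z x \<noteq> 0}" "finite {x. v x \<noteq> 0}"
  shows "matsuo_mult L z (\<lambda>x. c * v x) = (\<lambda>y. c * matsuo_mult L z v y :: 'r::comm_ring_1)"
proof
  fix y
  have "{x. c * v x \<noteq> 0} \<subseteq> {x. v x \<noteq> 0}" by auto
  then show "matsuo_mult L z (\<lambda>x. c * v x) y = c * matsuo_mult L z v y"
    using assms
    by (simp add: matsuo_mult_eq_sum[of "{x. z x \<noteq> 0}" "{x. v x \<noteq> 0}"] sum_distrib_left mult_ac)
qed

lemma matsuo_mult_scale_left:
  assumes "finite {x. z x \<noteq> 0}" "finite {x. v x \<noteq> 0}"
  shows "matsuo_mult L (\<lambda>x. c * v x) z = (\<lambda>y. c * matsuo_mult L v z y :: 'r::comm_ring_1)"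
  using matsuo_mult_scale_right[OF assms, where L = L and c = c] by (simp add: matsuo_mult_commute[of L _ z])

lemma matsuo_carrier_add:
  assumes "u \<in> matsuo_carrier P" "v \<in> matsuo_carrier P"
  shows "(\<lambda>x. u x + v x) \<in> matsuo_carrier P"
proof -
  have "{x. u x + v x \<noteq> 0} \<subseteq> {x. u x \<noteq> 0} \<union> {x. v x \<noteq> 0}" by auto
  then show ?thesis using assms finite_support_add[of u v] unfolding matsuo_carrier_def by blast
qed

section \<open>The Jacobi identity\<close>

definition jacobiator :: "'a set set \<Rightarrow> ('a \<Rightarrow> 'r::comm_ring_1) \<Rightarrow> ('a \<Rightarrow> 'r) \<Rightarrow> ('a \<Rightarrow> 'r) \<Rightarrow> 'a \<Rightarrow> 'r" where
  "jacobiator L u v w = (\<lambda>y. matsuo_mult L u (matsuo_mult L v w) y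
     + matsuo_mult L v (matsuo_mult L w u) y + matsuo_mult L w (matsuo_mult L u v) y)"

lemma jacobiator_rotate: "jacobiator L u v w = jacobiator L w u v"
  unfolding jacobiator_def by (simp add: add_ac)

lemma jacobiator_swap: "jacobiator L u v w = jacobiator L v u w"
  unfolding jacobiator_def by (simp add: matsuo_mult_commute[of L _ u] matsuo_mult_commute[of L w] add_ac)

lemma jacobiator_expand:
  assumes "finite {x. u x \<noteq> 0}" "finite {x. v x \<noteq> 0}" "finite {x. w x \<noteq> 0}"
  shows "jacobiator L u v w = (\<lambda>y. \<Sum>q\<in>{x. w x \<noteq> 0}. w q * jacobiator L u v (basis_vec q) y :: 'r::comm_ring_1)"
proof -
  note fin = assms finite_support_basis_vec finite_support_matsuo_mult
  have uvw: "matsuo_mult L u (matsuo_mult L v w)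
      = (\<lambda>y. \<Sum>q\<in>{x. w x \<noteq> 0}. w q * matsuo_mult L u (matsuo_mult L v (basis_vec q)) y)"
    by (simp add: matsuo_mult_expand_right[OF assms(2,3)] matsuo_mult_lincomb_right fin)
  have vwu: "matsuo_mult L v (matsuo_mult L w u)
      = (\<lambda>y. \<Sum>q\<in>{x. w x \<noteq> 0}. w q * matsuo_mult L v (matsuo_mult L (basis_vec q) u) y)"
    by (simp add: matsuo_mult_expand_left[OF assms(1,3)] matsuo_mult_lincomb_right fin)
  have wuv: "matsuo_mult L w (matsuo_mult L u v)
      = (\<lambda>y. \<Sum>q\<in>{x. w x \<noteq> 0}. w q * matsuo_mult L (basis_vec q) (matsuo_mult L u v) y)"
    by (rule matsuo_mult_expand_left) (simp_all add: fin)
  show ?thesis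
    unfolding jacobiator_def uvw vwu wuv by (simp add: sum.distrib distrib_left)
qed

text \<open>The jacobiator is linear in its last argument and invariant under rotation, so basis vectors
  can be substituted for the arguments one at a time.\<close>

lemma jacobiator_eq_zero_from_basis:
  assumes basis: "\<And>a p q. jacobiator L (basis_vec a) (basis_vec p) (basis_vec q) = (\<lambda>_. 0 :: 'r::comm_ring_1)"
    and fin: "finite {x. u x \<noteq> 0}" "finite {x. v x \<noteq> 0}" "finite {x. w x \<noteq> 0}"
  shows "jacobiator L u v w = (\<lambda>_. 0 :: 'r)"
proof -
  have extend: "jacobiator L u' v' w' = (\<lambda>_. 0 :: 'r)"
    if "finite {x. u' x \<noteq> 0}" "finite {x. v' x \<noteq> 0}" "finite {x. w' x \<noteq> 0}"
      and "\<And>q. jacobiator L u' v' (basis_vec q) = (\<lambda>_. 0)" for u' v' w'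
    using jacobiator_expand[OF that(1-3), where L = L] that(4) by simp
  note bv = finite_support_basis_vec
  have zero_bv_bv_w: "jacobiator L (basis_vec a) (basis_vec p) w = (\<lambda>_. 0)" for a p
    by (rule extend) (simp_all add: bv fin basis)
  have zero_w_bv_v: "jacobiator L w (basis_vec a) v = (\<lambda>_. 0)" for a
  proof (rule extend)
    show "jacobiator L w (basis_vec a) (basis_vec q) = (\<lambda>_. 0)" for q
      using zero_bv_bv_w jacobiator_rotate[of L "basis_vec a" "basis_vec q" w] by simp
  qed (simp_all add: bv fin)
  have "jacobiator L v w u = (\<lambda>_. 0)"
  proof (rule extend)
    show "jacobiator L v w (basis_vec q) = (\<lambda>_. 0)" for q
      using zero_w_bv_v jacobiator_rotate[of L w "basis_vec q" v] by simp
  qed (simp_all add: fin)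
  then show ?thesis using jacobiator_rotate[of L v w u] by simp
qed

lemma matsuo_mult_leibniz_if_jacobiator:
  assumes two: "(2::'r::comm_ring_1) = 0" and "jacobiator L u v w = (\<lambda>_. 0 :: 'r)"
  shows "matsuo_mult L u (matsuo_mult L v w)
    = (\<lambda>y. matsuo_mult L (matsuo_mult L u v) w y + matsuo_mult L v (matsuo_mult L u w) y)"
proof
  fix y
  have "matsuo_mult L u (matsuo_mult L v w) y
      + (matsuo_mult L v (matsuo_mult L w u) y + matsuo_mult L w (matsuo_mult L u v) y) = 0"
    using fun_cong[OF assms(2), of y] by (simp add: jacobiator_def add.assoc)
  then have "matsuo_mult L u (matsuo_mult L v w) y
      = matsuo_mult L v (matsuo_mult L w u) y + matsuo_mult L w (matsuo_mult L u v) y"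
    using char_two_add_self[OF two] by (metis add_right_cancel)
  then show "matsuo_mult L u (matsuo_mult L v w) y
      = matsuo_mult L (matsuo_mult L u v) w y + matsuo_mult L v (matsuo_mult L u w) y"
    by (simp add: matsuo_mult_commute[of L w] add.commute)
qed

lemma jacobiator_basis_repeated:
  assumes two: "(2::'r::comm_ring_1) = 0"
  shows "jacobiator L (basis_vec a) (basis_vec p) (basis_vec p) = (\<lambda>_. 0 :: 'r)"
  unfolding jacobiator_def
  by (simp add: matsuo_mult_basis_vec basis_prod_not_collinear basis_prod_commute[of L p a]
      char_two_add_self[OF two])

lemma jacobiator_basis_no_pair:
  assumes "\<not> collinear L a p" "\<not> collinear L a q" "\<not> collinear L p q"
  shows "jacobiator L (basis_vec a) (basis_vec p) (basis_vec q) = (\<lambda>_. 0 :: 'r::comm_ring_1)"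
  unfolding jacobiator_def
  using assms collinear_commute[of L q a]
  by (simp add: matsuo_mult_basis_vec basis_prod_not_collinear)

context symplectic_space
begin

lemma jacobiator_basis_one_pair:
  assumes ap: "collinear L a p" and aq: "\<not> collinear L a q" and pq: "\<not> collinear L p q"
    and "q \<noteq> a" "q \<noteq> p"
  shows "jacobiator L (basis_vec a) (basis_vec p) (basis_vec q) = (\<lambda>_. 0 :: 'r::comm_ring_1)"
proof -
  define r where "r = wedge L a p"
  have l: "{r, a, p} \<in> L" using collinear_line[OF ap] by (simp add: r_def insert_commute)
  have "q \<noteq> r" using aq line_collinear(2)[OF l] by auto
  then have q_off: "q \<notin> {r, a, p}" using assms(4,5) by simp
  have qr: "\<not> collinear L q r"
    using collinear_second_point[OF l q_off] aq pq collinear_commute[of L q a] collinear_commute[of L q p]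
    by blast
  show ?thesis
    unfolding jacobiator_def
    using line_collinear[OF l] line_wedge[OF l] aq pq qr
    by (simp add: matsuo_basis_simps collinear_commute[of L q] collinear_commute[of L p a])
qed

lemma jacobiator_basis_two_pairs:
  assumes two: "(2::'r::comm_ring_1) = 0"
    and ap: "collinear L a p" and aq: "collinear L a q" and pq: "\<not> collinear L p q" and "p \<noteq> q"
  shows "jacobiator L (basis_vec a) (basis_vec p) (basis_vec q) = (\<lambda>_. 0 :: 'r)"
proof -
  define p' where "p' = wedge L a p"
  define q' where "q' = wedge L a q"
  have lp: "{a, p, p'} \<in> L" using collinear_line[OF ap] by (simp add: p'_def)
  have lq: "{a, q, q'} \<in> L" using collinear_line[OF aq] by (simp add: q'_def)
  have "q \<noteq> p'" using pq line_collinear(5)[OF lp] by auto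
  then have "q \<notin> {a, p, p'}" using line_distinct[OF lq] \<open>p \<noteq> q\<close> by auto
  then have "{a, p, p'} \<noteq> {a, q, q'}" by auto
  from quadrilateral_completion[OF lp lq this] obtain s where
    "({p, q, s} \<in> L \<and> {p', q', s} \<in> L) \<or> ({p, q', s} \<in> L \<and> {p', q, s} \<in> L)" by blast
  then have l1: "{p, q', s} \<in> L" and l2: "{p', q, s} \<in> L" using line_collinear(1)[of p q s] pq by auto
  have qp: "\<not> collinear L q p" using pq collinear_commute by metis
  show ?thesis
    unfolding jacobiator_def
    using line_collinear[OF lp] line_wedge[OF lp] line_collinear[OF lq] line_wedge[OF lq]
      line_collinear[OF l1] line_wedge[OF l1] line_collinear[OF l2] line_wedge[OF l2] pq qp
    by (simp add: matsuo_basis_simps char_two_add_self[OF two] add_ac)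
qed

lemma jacobiator_basis_triangle:
  assumes two: "(2::'r::comm_ring_1) = 0"
    and ap: "collinear L a p" and aq: "collinear L a q" and pq: "collinear L p q"
  shows "jacobiator L (basis_vec a) (basis_vec p) (basis_vec q) = (\<lambda>_. 0 :: 'r)"
proof (cases "{a, p, q} \<in> L")
  case True
  then show ?thesis
    unfolding jacobiator_def using line_collinear[OF True] line_wedge[OF True]
    by (simp add: matsuo_basis_simps char_two_add_self[OF two] add_ac)
next
  case False
  define p' where "p' = wedge L a p"
  define q' where "q' = wedge L a q"
  define r where "r = wedge L p q"
  have lp: "{a, p, p'} \<in> L" using collinear_line[OF ap] by (simp add: p'_def)
  have lq: "{a, q, q'} \<in> L" using collinear_line[OF aq] by (simp add: q'_def)
  have lr: "{p, q, r} \<in> L" using collinear_line[OF pq] by (simp add: r_def)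
  have "r \<noteq> a" using False lr by (auto simp: insert_commute)
  then have "a \<notin> {p, q, r}" using line_distinct[OF lp] line_distinct[OF lq] by auto
  then have ar: "\<not> collinear L a r" using not_collinear_three_points[OF lr _ ap aq] by blast
  have "q' \<noteq> p" using False lq by (auto simp: insert_commute)
  then have "p \<notin> {a, q, q'}" using line_distinct[OF lp] line_distinct[OF lr] by auto
  then have pq': "\<not> collinear L p q'"
    using not_collinear_three_points[OF lq _ _ pq] line_collinear(2)[OF lp] by blast
  have "p' \<noteq> q" using False lp by auto
  then have "q \<notin> {a, p, p'}" using line_distinct[OF lq] line_distinct[OF lr] by auto
  then have qp': "\<not> collinear L q p'"
    using not_collinear_three_points[OF lp _ _ line_collinear(2)[OF lr]] line_collinear(2)[OF lq] by blast
  have ra: "\<not> collinear L r a" and q'p: "\<not> collinear L q' p" and p'q: "\<not> collinear L p' q"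
    using ar pq' qp' collinear_commute by metis+
  show ?thesis
    unfolding jacobiator_def
    using line_collinear[OF lp] line_wedge[OF lp] line_collinear[OF lq] line_wedge[OF lq]
      line_collinear[OF lr] line_wedge[OF lr] ar pq' qp' ra q'p p'q
    by (simp add: matsuo_basis_simps char_two_add_self[OF two] add_ac)
qed

text \<open>The jacobiator is symmetric, so up to a permutation of a, p, q the collinear pairs among
  three distinct points form one of the four patterns treated above.\<close>

lemma jacobiator_basis:
  assumes two: "(2::'r::comm_ring_1) = 0"
  shows "jacobiator L (basis_vec a) (basis_vec p) (basis_vec q) = (\<lambda>_. 0 :: 'r)"
proof -
  let ?J = "\<lambda>x y z. jacobiator L (basis_vec x) (basis_vec y) (basis_vec z) :: 'a \<Rightarrow> 'r"
  have swap: "?J x y z = ?J y x z" and rotate: "?J x y z = ?J z x y" for x y z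
    by (rule jacobiator_swap, rule jacobiator_rotate)
  consider "a = p" | "a = q" | "p = q" | "a \<noteq> p" "a \<noteq> q" "p \<noteq> q" by blast
  then show ?thesis
  proof cases
    case 1
    then show ?thesis using rotate[of p p q] jacobiator_basis_repeated[OF two, of L q p] by simp
  next
    case 2
    then show ?thesis using swap[of q p q] jacobiator_basis_repeated[OF two, of L p q] by simp
  next
    case 3
    then show ?thesis using jacobiator_basis_repeated[OF two, of L a q] by simp
  next
    case 4
    have sym: "?J a q p = ?J a p q" "?J p a q = ?J a p q" "?J p q a = ?J a p q" "?J q a p = ?J a p q"
      using swap rotate by metis+
    have col_sym: "collinear L p a = collinear L a p" "collinear L q a = collinear L a q"
      "collinear L q p = collinear L p q"
      by (simp_all add: collinear_commute)
    show ?thesis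
      using jacobiator_basis_no_pair[of L a p q]
        jacobiator_basis_one_pair[where 'r = 'r, of a p q] jacobiator_basis_one_pair[where 'r = 'r, of a q p]
        jacobiator_basis_one_pair[where 'r = 'r, of p q a]
        jacobiator_basis_two_pairs[OF two, of a p q] jacobiator_basis_two_pairs[OF two, of p a q]
        jacobiator_basis_two_pairs[OF two, of q a p]
        jacobiator_basis_triangle[OF two, of a p q] 4
      by (cases "collinear L a p"; cases "collinear L a q"; cases "collinear L p q")
        (simp_all add: sym col_sym)
  qed
qed

lemma matsuo_mult_leibniz:
  assumes two: "(2::'r::comm_ring_1) = 0"
    and "finite {x. z x \<noteq> 0}" "finite {x. u x \<noteq> 0}" "finite {x. v x \<noteq> 0}"
  shows "matsuo_mult L z (matsuo_mult L u v)
    = (\<lambda>y. matsuo_mult L (matsuo_mult L z u) v y + matsuo_mult L u (matsuo_mult L z v) y :: 'r)"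
  by (rule matsuo_mult_leibniz_if_jacobiator[OF two jacobiator_eq_zero_from_basis[OF jacobiator_basis[OF two] assms(2-4)]])

section \<open>Idempotence of the adjoint action of a line\<close>

lemma line_elem_eq:
  assumes "{a, b, c} \<in> L"
  shows "line_elem {a, b, c} = (\<lambda>y. basis_vec a y + basis_vec b y + basis_vec c y :: 'r::comm_ring_1)"
  using line_distinct[OF assms] by (intro ext) (auto simp: line_elem_def basis_vec_def)

lemma line_mult_eq:
  assumes "{a, b, c} \<in> L" "finite {x. v x \<noteq> 0}"
  shows "matsuo_mult L (line_elem {a, b, c}) v = (\<lambda>y. matsuo_mult L (basis_vec a) v y
    + matsuo_mult L (basis_vec b) v y + matsuo_mult L (basis_vec c) v y :: 'r::comm_ring_1)"
  using assms(2)
  by (simp add: line_elem_eq[OF assms(1)] matsuo_mult_add_left finite_support_add finite_support_basis_vec)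

lemma line_mult_point_on_line:
  assumes two: "(2::'r::comm_ring_1) = 0" and l: "{a, b, c} \<in> L"
  shows "matsuo_mult L (line_elem {a, b, c}) (basis_vec a) = (\<lambda>_. 0 :: 'r)"
  using line_collinear[OF l] line_wedge[OF l]
  by (simp add: line_mult_eq[OF l] matsuo_basis_simps char_two_add_self[OF two] add_ac)

lemma line_mult_idem_point_collinear_two:
  assumes two: "(2::'r::comm_ring_1) = 0" and l: "{a, b, c} \<in> L" and p: "p \<notin> {a, b, c}"
    and ap: "collinear L a p" and bp: "collinear L b p" and cp: "\<not> collinear L c p"
  shows "matsuo_mult L (line_elem {a, b, c}) (matsuo_mult L (line_elem {a, b, c}) (basis_vec p))
    = (matsuo_mult L (line_elem {a, b, c}) (basis_vec p) :: 'a \<Rightarrow> 'r)"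
proof -
  define q where "q = wedge L a p"
  have la: "{a, p, q} \<in> L" using collinear_line[OF ap] by (simp add: q_def)
  have "{a, b, c} \<noteq> {a, p, q}" using p by auto
  from quadrilateral_completion[OF l la this] obtain s where
    "({b, p, s} \<in> L \<and> {c, q, s} \<in> L) \<or> ({b, q, s} \<in> L \<and> {c, p, s} \<in> L)" by blast
  then have lb: "{b, p, s} \<in> L" and lc: "{c, q, s} \<in> L" using line_collinear(1)[of c p s] cp by auto
  note dist = line_distinct[OF l] line_distinct[OF la] line_distinct[OF lb] line_distinct[OF lc]
  have "q \<noteq> b"
  proof
    assume "q = b"
    then have "{a, p, b} \<in> L" using la by simp
    then have "wedge L a b = p" by (rule line_wedge(3))
    with line_wedge(1)[OF l] p show False by simp
  qed
  then have "q \<notin> {a, c, b}" using dist by auto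
  moreover have "{a, c, b} \<in> L" using l by (simp add: insert_commute)
  ultimately have qb: "\<not> collinear L q b"
    using not_collinear_three_points[OF _ _ line_collinear(4)[OF la] line_collinear(2)[OF lc]] by blast
  have "s \<noteq> a"
  proof
    assume "s = a"
    then have "{b, p, a} \<in> L" using lb by simp
    then have "wedge L a b = p" by (rule line_wedge(4))
    with line_wedge(1)[OF l] p show False by simp
  qed
  then have "s \<notin> {b, c, a}" using dist by auto
  moreover have "{b, c, a} \<in> L" using l by (simp add: insert_commute)
  ultimately have sa: "\<not> collinear L s a"
    using not_collinear_three_points[OF _ _ line_collinear(4)[OF lb] line_collinear(4)[OF lc]] by blast
  have bq: "\<not> collinear L b q" and as: "\<not> collinear L a s" and pc: "\<not> collinear L p c"
    using qb sa cp collinear_commute by metis+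
  show ?thesis
    using line_collinear[OF l] line_wedge[OF l] line_collinear[OF la] line_wedge[OF la]
      line_collinear[OF lb] line_wedge[OF lb] line_collinear[OF lc] line_wedge[OF lc] qb sa cp bq as pc
    by (simp add: line_mult_eq[OF l] matsuo_basis_simps char_two_add_self[OF two] add_ac)
qed

lemma line_mult_idem_basis_vec:
  assumes two: "(2::'r::comm_ring_1) = 0" and "l \<in> L"
  shows "matsuo_mult L (line_elem l) (matsuo_mult L (line_elem l) (basis_vec p))
    = (matsuo_mult L (line_elem l) (basis_vec p) :: 'a \<Rightarrow> 'r)"
proof -
  obtain a b c where abc: "l = {a, b, c}" using card_line[OF \<open>l \<in> L\<close>] by (metis card_3_iff)
  have l: "{a, b, c} \<in> L" "{b, c, a} \<in> L" "{c, a, b} \<in> L" "{a, c, b} \<in> L"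
    using \<open>l \<in> L\<close> by (simp_all add: abc insert_commute)
  have perm: "{b, c, a} = {a, b, c}" "{c, a, b} = {a, b, c}" "{a, c, b} = {a, b, c}" by auto
  have killed: ?thesis if "matsuo_mult L (line_elem l) (basis_vec p) = (\<lambda>_. 0 :: 'r)"
    using that by simp
  show ?thesis
  proof (cases "p \<in> l")
    case True
    then show ?thesis
      using line_mult_point_on_line[OF two l(1)] line_mult_point_on_line[OF two l(2)]
        line_mult_point_on_line[OF two l(3)]
      by (intro killed) (auto simp: abc perm)
  next
    case False
    then have p: "p \<notin> {a, b, c}" "p \<notin> {b, c, a}" "p \<notin> {a, c, b}" by (auto simp: abc)
    from point_off_line_collinear_cases[OF l(1) p(1)] show ?thesis
    proof (elim disjE conjE)
      assume "\<not> collinear L a p" "\<not> collinear L b p" "\<not> collinear L c p"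
      then show ?thesis
        by (intro killed) (simp add: abc line_mult_eq[OF l(1)] matsuo_basis_simps)
    next
      assume "collinear L a p" "collinear L b p" "\<not> collinear L c p"
      then show ?thesis using line_mult_idem_point_collinear_two[OF two l(1) p(1)] by (simp add: abc)
    next
      assume "collinear L b p" "collinear L c p" "\<not> collinear L a p"
      then show ?thesis using line_mult_idem_point_collinear_two[OF two l(2) p(2)] by (simp add: abc perm)
    next
      assume "collinear L a p" "collinear L c p" "\<not> collinear L b p"
      then show ?thesis using line_mult_idem_point_collinear_two[OF two l(4) p(3)] by (simp add: abc perm)
    qed
  qed
qed

lemma finite_line: "l \<in> L \<Longrightarrow> finite l"
  using card_line[of l] by (intro card_ge_0_finite) simp

lemma finite_support_line_elem: "l \<in> L \<Longrightarrow> finite {x. (line_elem l x :: 'r::comm_ring_1) \<noteq> 0}"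
  by (rule finite_subset[OF _ finite_line]) (auto simp: line_elem_def)

lemma line_mult_idem:
  assumes two: "(2::'r::comm_ring_1) = 0" and l: "l \<in> L" and v: "finite {x. v x \<noteq> 0}"
  shows "matsuo_mult L (line_elem l) (matsuo_mult L (line_elem l) v) = (matsuo_mult L (line_elem l) v :: 'a \<Rightarrow> 'r)"
proof -
  note fin = finite_support_line_elem[OF l] finite_support_basis_vec finite_support_matsuo_mult v
  have "matsuo_mult L (line_elem l) (matsuo_mult L (line_elem l) v)
      = (\<lambda>y. \<Sum>q\<in>{x. v x \<noteq> 0}. v q * matsuo_mult L (line_elem l) (matsuo_mult L (line_elem l) (basis_vec q)) y)"
    by (simp add: matsuo_mult_expand_right[OF fin(1) v] matsuo_mult_lincomb_right fin)
  also have "\<dots> = matsuo_mult L (line_elem l) v"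
    by (simp add: line_mult_idem_basis_vec[OF two l] matsuo_mult_expand_right[OF fin(1) v])
  finally show ?thesis .
qed

end

lemma eigenspaces_ad_inter: "eigenspace_ad P L l 0 \<inter> eigenspace_ad P L l 1 = {\<lambda>_. 0 :: 'r::comm_ring_1}"
  by (auto simp: eigenspace_ad_def matsuo_carrier_def)

context symplectic_space
begin

lemma support_basis_prod_subset:
  assumes "p \<in> P" "q \<in> P"
  shows "{x. (basis_prod L p q x :: 'r::comm_ring_1) \<noteq> 0} \<subseteq> P"
proof (cases "collinear L p q")
  case True
  then have "wedge L p q \<in> P" using line_subset[OF collinear_line] by blast
  then show ?thesis using support_basis_prod[of L p q] assms by blast
qed (simp add: basis_prod_not_collinear)

lemma matsuo_mult_closed:
  assumes "u \<in> matsuo_carrier P" "v \<in> matsuo_carrier P"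
  shows "(matsuo_mult L u v :: 'a \<Rightarrow> 'r::comm_ring_1) \<in> matsuo_carrier P"
proof -
  have "{x. (matsuo_mult L u v x :: 'r) \<noteq> 0} \<subseteq> P"
    using support_matsuo_mult[of L u v] support_basis_prod_subset assms
    unfolding matsuo_carrier_def by blast
  with assms show ?thesis by (simp add: matsuo_carrier_def finite_support_matsuo_mult)
qed

lemma eigenspace_ad_decomposition:
  assumes two: "(2::'r::comm_ring_1) = 0" and l: "l \<in> L" and v: "v \<in> matsuo_carrier P"
  shows "\<exists>v0\<in>eigenspace_ad P L l 0. \<exists>v1\<in>eigenspace_ad P L l (1::'r). v = (\<lambda>x. v0 x + v1 x)"
proof -
  let ?e = "line_elem l :: 'a \<Rightarrow> 'r"
  have e: "?e \<in> matsuo_carrier P" "finite {x. ?e x \<noteq> 0}"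
    using finite_support_line_elem[OF l] line_subset[OF l]
    by (auto simp: matsuo_carrier_def line_elem_def)
  define v1 where "v1 = matsuo_mult L ?e v"
  define v0 where "v0 = (\<lambda>x. v x + v1 x)"
  have v1: "v1 \<in> matsuo_carrier P" using matsuo_mult_closed[OF e(1) v] by (simp add: v1_def)
  have fin: "finite {x. v x \<noteq> 0}" "finite {x. v1 x \<noteq> 0}"
    using v v1 by (simp_all add: matsuo_carrier_def)
  have idem: "matsuo_mult L ?e v1 = v1" using line_mult_idem[OF two l fin(1)] by (simp add: v1_def)
  have "matsuo_mult L ?e v0 = (\<lambda>_. 0)"
    using idem by (simp add: v0_def matsuo_mult_add_right e(2) fin v1_def[symmetric] char_two_add_self[OF two])
  then have "v0 \<in> eigenspace_ad P L l 0"
    using matsuo_carrier_add[OF v v1] by (simp add: eigenspace_ad_def v0_def)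
  moreover have "v1 \<in> eigenspace_ad P L l 1" using v1 idem by (simp add: eigenspace_ad_def)
  moreover have "v = (\<lambda>x. v0 x + v1 x)" by (simp add: v0_def add.assoc char_two_add_self[OF two])
  ultimately show ?thesis by blast
qed

lemma eigenspace_ad_mult:
  assumes two: "(2::'r::comm_ring_1) = 0" and l: "l \<in> L"
    and a: "a \<in> eigenspace_ad P L l c" and b: "b \<in> eigenspace_ad P L l (d::'r)"
  shows "matsuo_mult L a b \<in> eigenspace_ad P L l (c + d)"
proof -
  have carrier: "a \<in> matsuo_carrier P" "b \<in> matsuo_carrier P"
    and ea: "matsuo_mult L (line_elem l) a = (\<lambda>x. c * a x)"
    and eb: "matsuo_mult L (line_elem l) b = (\<lambda>x. d * b x)"
    using a b by (simp_all add: eigenspace_ad_def)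
  have fin: "finite {x. a x \<noteq> 0}" "finite {x. b x \<noteq> 0}"
    using carrier by (simp_all add: matsuo_carrier_def)
  have "matsuo_mult L (line_elem l) (matsuo_mult L a b)
      = (\<lambda>y. matsuo_mult L (matsuo_mult L (line_elem l) a) b y + matsuo_mult L a (matsuo_mult L (line_elem l) b) y)"
    by (rule matsuo_mult_leibniz[OF two finite_support_line_elem[OF l] fin])
  also have "\<dots> = (\<lambda>x. (c + d) * matsuo_mult L a b x)"
    by (simp add: ea eb matsuo_mult_scale_left matsuo_mult_scale_right fin distrib_right)
  finally show ?thesis
    using matsuo_mult_closed[OF carrier] by (simp add: eigenspace_ad_def)
qed

end

theorem theorem5p24:
  fixes G :: "'g monoid" and D :: "'g set"
  assumes "three_transposition_group G D"
    and "symplectic_type D (fischer_lines G D)"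
    and "(2::'r::comm_ring_1) = 0"
    and "l \<in> fischer_lines G D"
  defines "A \<equiv> (matsuo_carrier D :: ('g \<Rightarrow> 'r) set)"
    and "A0 \<equiv> eigenspace_ad D (fischer_lines G D) l (0::'r)"
    and "A1 \<equiv> eigenspace_ad D (fischer_lines G D) l (1::'r)"
    and "mm \<equiv> matsuo_mult (fischer_lines G D) :: ('g \<Rightarrow> 'r) \<Rightarrow> _"
  shows "(\<forall>v\<in>A. \<exists>v0\<in>A0. \<exists>v1\<in>A1. v = (\<lambda>x. v0 x + v1 x)) \<and> A0 \<inter> A1 = {(\<lambda>x. 0)}
    \<and> (\<forall>a\<in>A0. \<forall>b\<in>A0. mm a b \<in> A0)
    \<and> (\<forall>a\<in>A0. \<forall>b\<in>A1. mm a b \<in> A1)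
    \<and> (\<forall>a\<in>A1. \<forall>b\<in>A1. mm a b \<in> A0)"
proof -
  interpret symplectic_space D "fischer_lines G D"
    by unfold_locales (fact assms(2) | simp add: fischer_lines_def)+
  have mult: "mm a b \<in> eigenspace_ad D (fischer_lines G D) l (c + d)"
    if "a \<in> eigenspace_ad D (fischer_lines G D) l c" "b \<in> eigenspace_ad D (fischer_lines G D) l d"
    for a b c d
    unfolding mm_def by (rule eigenspace_ad_mult[OF assms(3,4) that])
  have "\<forall>v\<in>A. \<exists>v0\<in>A0. \<exists>v1\<in>A1. v = (\<lambda>x. v0 x + v1 x)"
    unfolding A_def A0_def A1_def using eigenspace_ad_decomposition[OF assms(3,4)] by blast
  moreover have "A0 \<inter> A1 = {(\<lambda>x. 0)}"
    unfolding A0_def A1_def by (rule eigenspaces_ad_inter)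
  moreover have "\<forall>a\<in>A0. \<forall>b\<in>A0. mm a b \<in> A0"
    unfolding A0_def using mult[where c = 0 and d = 0] by simp
  moreover have "\<forall>a\<in>A0. \<forall>b\<in>A1. mm a b \<in> A1"
    unfolding A0_def A1_def using mult[where c = 0 and d = 1] by simp
  moreover have "\<forall>a\<in>A1. \<forall>b\<in>A1. mm a b \<in> A0"
    unfolding A0_def A1_def using mult[where c = 1 and d = 1] assms(3) by simp
  ultimately show ?thesis by blast
qed

end
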